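(* Let $f:\mathbb{R}^n\to\mathbb{R}$ be a convex, continuously differentiable, locally strongly convex function with locally Lipschitz gradient and $\mathcal{X}^*:=\arg\min f\neq\emptyset$, optimal value $f^*$. Let $x^0$ be such that $\Lambda(x^0):=\{x:f(x)\le f(x^0)\}$ is bounded; let $r:=\max\{\|x\|:x\in\Lambda(x^0)\}$, $\Omega:=\overline{B}(0;5r)$, let $L_\Omega>0$ satisfy $\|\nabla f(x)-\nabla f(y)\|\le L_\Omega\|x-y\|$ on $\Omega$, and $\mu_\Omega:=\inf_{x,y\in\Omega,x\ne y}\frac{\langle\nabla f(y)-\nabla f(x),y-x\rangle}{\|y-x\|^2}$, with $\mu_\Omega<L_\Omega$. Let $(x^k)$ be generated by $x^{k+1}=x^k-\alpha_k\nabla f(x^k)$ with $\alpha_k\in[\bar\alpha,1/L_\Omega]$, $0<\bar\alpha<1/L_\Omega$. Let $\varepsilon>0$, $x^*$ an optimal solution, $q_0:=\frac{2\bar\alpha\mu_\Omega L_\Omega}{\mu_\Omega+L_\Omega}$, $q_1:=\frac{\mu_\Omega^2\bar\alpha^2}{4}$, and for $a,b>0$ let $M(a,b):=\Big\lceil\frac{\log(\varepsilon^{-1})+\log a}{\log(b^{-1})}+1\Big\rceil$. Then: (a) the first index $N_x(\varepsilon)$ with $\|x^k-x^*\|\le\varepsilon$ satisfies $N_x(\varepsilon)\le M(\|x^0-x^*\|,\sqrt{1-q_0})$; (b) the first index $N_f(\varepsilon)$ with $f(x^k)-f^*\le\varepsilon$ satisfies $N_f(\varepsilon)\le M(f(x^0)-f^*,1-q_1)$;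 (c) the first index $N_{\nabla f}(\varepsilon)$ with $\|\nabla f(x^k)\|\le\varepsilon$ satisfies $N_{\nabla f}(\varepsilon)\le M\big(\sqrt{2L_\Omega^2\mu_\Omega^{-1}(f(x^0)-f^* )},\sqrt{1-q_1}\big)$.
   Context: $f$ is locally strongly convex if every $x$ has $\delta_x>0$, $\mu_x>0$ such that $f(y)\ge f(z)+\langle\nabla f(z),y-z\rangle+\frac{\mu_x}{2}\|y-z\|^2$ for all $y,z\in B(x;\delta_x)$. *)

theory Defs
  imports "HOL-Analysis.Analysis"
begin

definition is_gradient :: "('a::euclidean_space \<Rightarrow> real) \<Rightarrow> ('a \<Rightarrow> 'a) \<Rightarrow> bool" where
  "is_gradient f df \<longleftrightarrow> (\<forall>x. (f has_derivative (\<lambda>h. df x \<bullet> h)) (at x))"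

definition locally_strongly_convex ::
  "('a::euclidean_space \<Rightarrow> real) \<Rightarrow> ('a \<Rightarrow> 'a) \<Rightarrow> bool" where
  "locally_strongly_convex f df \<longleftrightarrow>
     (\<forall>x. \<exists>\<delta>>0. \<exists>\<mu>>0. \<forall>y\<in>ball x \<delta>. \<forall>z\<in>ball x \<delta>.
        f y \<ge> f z + df z \<bullet> (y - z) + \<mu> / 2 * (norm (y - z))\<^sup>2)"

definition locally_lipschitz_grad :: "('a::euclidean_space \<Rightarrow> 'a) \<Rightarrow> bool" where
  "locally_lipschitz_grad df \<longleftrightarrow>
     (\<forall>x. \<exists>\<delta>>0. \<exists>L. \<forall>y\<in>ball x \<delta>. \<forall>z\<in>ball x \<delta>.
        norm (df y - df z) \<le> L * norm (y - z))"

definition sublevel :: "('a \<Rightarrow> real) \<Rightarrow> 'a \<Rightarrow> 'a set" where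
  "sublevel f x0 = {x. f x \<le> f x0}"

definition mu_on :: "('a::euclidean_space \<Rightarrow> 'a) \<Rightarrow> 'a set \<Rightarrow> real" where
  "mu_on df \<Omega> = Inf {(df y - df x) \<bullet> (y - x) / (norm (y - x))\<^sup>2 | x y. x \<in> \<Omega> \<and> y \<in> \<Omega> \<and> x \<noteq> y}"

definition iter_bound :: "real \<Rightarrow> real \<Rightarrow> real \<Rightarrow> int" where
  "iter_bound \<epsilon> a b = \<lceil>(ln (inverse \<epsilon>) + ln a) / ln (inverse b) + 1\<rceil>"

end

theory Submission
  imports Defs
begin

(* On the compact convex ball Omega = cball 0 (5 r), local strong convexity becomes uniform
   (a Lebesgue number of a finite subcover, then telescoping along segments), so mu_Omega > 0
   and f is mu-strongly convex and L-smooth on Omega.  The descent lemma keeps the iterates in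
   the sublevel set, inside cball 0 r, and each step stays inside cball 0 (3 r).  There,
   gradient dominance  |df x|^2 >= 2 mu (f x - f* )  contracts f - f* by the factor
   1 - alphabar mu <= 1 - q1 per step; together with  |df x| <= L |x - x*|  and strong
   convexity this also bounds the gradients.  The interpolation inequality
   |g|^2 + mu L |d|^2 <= (L + mu) <g, d>, i.e. cocoercivity of the gradient of
   f - mu/2 |.|^2, makes the gradient step a sqrt (1 - q0)-contraction towards x*. *)

lemma has_real_derivative_along_line:
  assumes "is_gradient f df"
  shows "((\<lambda>t. f (v + t *\<^sub>R d)) has_real_derivative (df (v + t *\<^sub>R d) \<bullet> d)) (at t)"
proof -
  have line: "((\<lambda>t. v + t *\<^sub>R d) has_derivative (\<lambda>s. s *\<^sub>R d)) (at t)"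
    by (auto intro!: derivative_eq_intros)
  have "(f has_derivative (\<lambda>h. df (v + t *\<^sub>R d) \<bullet> h)) (at (v + t *\<^sub>R d))"
    using assms unfolding is_gradient_def by blast
  from has_derivative_compose[OF line this]
  have "((\<lambda>t. f (v + t *\<^sub>R d)) has_derivative (\<lambda>s. s * (df (v + t *\<^sub>R d) \<bullet> d))) (at t)"
    by (simp add: o_def)
  then show ?thesis
    by (simp add: has_field_derivative_def mult_commute_abs)
qed

lemma lower_quadratic_bound_along_segment:
  assumes "is_gradient f df"
    and growth: "\<And>t. t \<in> {0..1} \<Longrightarrow> c * t * (norm d)\<^sup>2 \<le> (df (v + t *\<^sub>R d) - df v) \<bullet> d"
  shows "f v + df v \<bullet> d + c / 2 * (norm d)\<^sup>2 \<le> f (v + d)"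
proof -
  let ?h = "\<lambda>t. f (v + t *\<^sub>R d) - t * (df v \<bullet> d) - c / 2 * t\<^sup>2 * (norm d)\<^sup>2"
  let ?h' = "\<lambda>t. df (v + t *\<^sub>R d) \<bullet> d - df v \<bullet> d - c * t * (norm d)\<^sup>2"
  have "?h 0 \<le> ?h 1"
  proof (rule deriv_nonneg_imp_mono[of 0 1 ?h ?h'])
    fix t :: real assume t: "t \<in> {0..1}"
    have "((\<lambda>t. t * (df v \<bullet> d)) has_real_derivative (df v \<bullet> d)) (at t)"
      and "((\<lambda>t. c / 2 * t\<^sup>2 * (norm d)\<^sup>2) has_real_derivative c * t * (norm d)\<^sup>2) (at t)"
      by (auto intro!: derivative_eq_intros)
    from DERIV_diff[OF DERIV_diff[OF has_real_derivative_along_line[OF assms(1)] this(1)] this(2)]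
    show "(?h has_real_derivative ?h' t) (at t)" .
    show "0 \<le> ?h' t"
      using growth[OF t] by (simp add: inner_diff_left)
  qed simp
  then show ?thesis by simp
qed

lemma upper_quadratic_bound_along_segment:
  assumes "is_gradient f df"
    and growth: "\<And>t. t \<in> {0..1} \<Longrightarrow> (df (v + t *\<^sub>R d) - df v) \<bullet> d \<le> c * t * (norm d)\<^sup>2"
  shows "f (v + d) \<le> f v + df v \<bullet> d + c / 2 * (norm d)\<^sup>2"
proof -
  have "((\<lambda>y. - f y) has_derivative (\<lambda>h. (- df x) \<bullet> h)) (at x)" for x
    using has_derivative_minus[of f "\<lambda>h. df x \<bullet> h" "at x"] assms(1)
    unfolding is_gradient_def by simp
  then have "is_gradient (\<lambda>y. - f y) (\<lambda>y. - df y)"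
    unfolding is_gradient_def by blast
  then have "- f v + (- df v) \<bullet> d + (- c) / 2 * (norm d)\<^sup>2 \<le> - f (v + d)"
    by (rule lower_quadratic_bound_along_segment) (use growth in \<open>force simp: inner_diff_left\<close>)
  then show ?thesis
    by simp
qed

lemma convex_line_point_mem:
  assumes "convex S" "u \<in> S" "v \<in> S" "t \<in> {0..1}"
  shows "v + t *\<^sub>R (u - v) \<in> S"
proof -
  have "v + t *\<^sub>R (u - v) = (1 - t) *\<^sub>R v + t *\<^sub>R u"
    by (simp add: algebra_simps)
  then show ?thesis
    using convexD_alt[OF assms(1,3,2)] assms(4) by auto
qed

lemma strong_convexity_from_strong_monotonicity:
  assumes "is_gradient f df" "convex S"
    and mono: "\<And>x y. x \<in> S \<Longrightarrow> y \<in> S \<Longrightarrow> \<mu> * (norm (y - x))\<^sup>2 \<le> (df y - df x) \<bullet> (y - x)"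
    and "u \<in> S" "v \<in> S"
  shows "f v + df v \<bullet> (u - v) + \<mu> / 2 * (norm (u - v))\<^sup>2 \<le> f u"
proof -
  have "f v + df v \<bullet> (u - v) + \<mu> / 2 * (norm (u - v))\<^sup>2 \<le> f (v + (u - v))"
  proof (rule lower_quadratic_bound_along_segment[OF assms(1)])
    fix t :: real assume t: "t \<in> {0..1}"
    define w where "w = v + t *\<^sub>R (u - v)"
    have "w \<in> S"
      unfolding w_def using convex_line_point_mem[OF assms(2,4,5) t] .
    from mono[OF \<open>v \<in> S\<close> this]
    have "\<mu> * (norm (t *\<^sub>R (u - v)))\<^sup>2 \<le> (df w - df v) \<bullet> (t *\<^sub>R (u - v))"
      by (simp add: w_def)
    then have "t * (\<mu> * t * (norm (u - v))\<^sup>2) \<le> t * ((df w - df v) \<bullet> (u - v))"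
      using t by (simp add: power2_eq_square mult.assoc mult.left_commute)
    then show "\<mu> * t * (norm (u - v))\<^sup>2 \<le> (df (v + t *\<^sub>R (u - v)) - df v) \<bullet> (u - v)"
      using t by (cases "t = 0") (auto simp: w_def)
  qed
  then show ?thesis by simp
qed

lemma descent_lemma:
  assumes "is_gradient f df" "convex S"
    and lip: "\<And>x y. x \<in> S \<Longrightarrow> y \<in> S \<Longrightarrow> norm (df x - df y) \<le> L * norm (x - y)"
    and "u \<in> S" "v \<in> S"
  shows "f u \<le> f v + df v \<bullet> (u - v) + L / 2 * (norm (u - v))\<^sup>2"
proof -
  have "f (v + (u - v)) \<le> f v + df v \<bullet> (u - v) + L / 2 * (norm (u - v))\<^sup>2"
  proof (rule upper_quadratic_bound_along_segment[OF assms(1)])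
    fix t :: real assume t: "t \<in> {0..1}"
    define w where "w = v + t *\<^sub>R (u - v)"
    have "(df w - df v) \<bullet> (u - v) \<le> norm (df w - df v) * norm (u - v)"
      by (rule norm_cauchy_schwarz)
    also have "\<dots> \<le> (L * norm (w - v)) * norm (u - v)"
      using lip[OF convex_line_point_mem[OF assms(2,4,5) t] \<open>v \<in> S\<close>]
      by (intro mult_right_mono) (simp_all add: w_def)
    also have "\<dots> = L * t * (norm (u - v))\<^sup>2"
      using t by (simp add: w_def power2_eq_square)
    finally show "(df (v + t *\<^sub>R (u - v)) - df v) \<bullet> (u - v) \<le> L * t * (norm (u - v))\<^sup>2"
      by (simp add: w_def)
  qed
  then show ?thesis by simp
qed

lemma convex_uniform_subdivision:
  fixes x y :: "'a::real_normed_vector"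
  assumes "convex K" "x \<in> K" "y \<in> K" "e > 0"
  obtains N :: nat and p where "N > 0" "p 0 = x" "p N = y" "\<And>i. i \<le> N \<Longrightarrow> p i \<in> K"
    "\<And>i. p (Suc i) - p i = (1 / real N) *\<^sub>R (y - x)" "norm ((1 / real N) *\<^sub>R (y - x)) < e"
proof -
  obtain N :: nat where N: "norm (y - x) / e < real N"
    using reals_Archimedean2 by blast
  moreover have "0 \<le> norm (y - x) / e"
    using assms(4) by simp
  ultimately have N0: "N > 0" by linarith
  let ?p = "\<lambda>i. x + (real i / real N) *\<^sub>R (y - x)"
  show ?thesis
  proof (rule that[of N ?p, OF N0])
    show "?p 0 = x" "?p N = y"
      using N0 by simp_all
    show "?p i \<in> K" if "i \<le> N" for i
      using convex_line_point_mem[OF assms(1,3,2)] that N0 by simp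
    show "?p (Suc i) - ?p i = (1 / real N) *\<^sub>R (y - x)" for i
      by (simp add: scaleR_diff_left[symmetric] diff_divide_distrib[symmetric])
    have "norm ((1 / real N) *\<^sub>R (y - x)) = norm (y - x) / real N"
      by simp
    also have "\<dots> < e"
      using N N0 assms(4) by (simp add: field_simps)
    finally show "norm ((1 / real N) *\<^sub>R (y - x)) < e" .
  qed
qed

lemma strongly_monotone_from_local:
  assumes "convex K" "e > 0"
    and local: "\<And>p q. p \<in> K \<Longrightarrow> q \<in> K \<Longrightarrow> norm (q - p) < e \<Longrightarrow>
                  m * (norm (q - p))\<^sup>2 \<le> (df q - df p) \<bullet> (q - p)"
    and "x \<in> K" "y \<in> K"
  shows "m * (norm (y - x))\<^sup>2 \<le> (df y - df x) \<bullet> (y - x)"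
proof -
  obtain N p where N: "N > 0" "p 0 = x" "p N = y" "\<And>i. i \<le> N \<Longrightarrow> p i \<in> K"
    and step: "\<And>i. p (Suc i) - p i = (1 / real N) *\<^sub>R (y - x)"
    and small: "norm ((1 / real N) *\<^sub>R (y - x)) < e"
    using convex_uniform_subdivision[OF assms(1,4,5,2)] by metis
  have "m * (norm (y - x))\<^sup>2 / real N \<le> (df (p (Suc i)) - df (p i)) \<bullet> (y - x)" if "i < N" for i
  proof -
    have "m * (norm (p (Suc i) - p i))\<^sup>2 \<le> (df (p (Suc i)) - df (p i)) \<bullet> (p (Suc i) - p i)"
      using local[of "p i" "p (Suc i)"] N(4)[of i] N(4)[of "Suc i"] that step small by simp
    then have "real N * (m * ((norm (y - x))\<^sup>2 / (real N)\<^sup>2))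
        \<le> real N * ((1 / real N) * ((df (p (Suc i)) - df (p i)) \<bullet> (y - x)))"
      unfolding step by (intro mult_left_mono) (simp_all add: power_divide)
    then show ?thesis
      using N(1) by (simp add: power2_eq_square)
  qed
  then have "(\<Sum>i<N. m * (norm (y - x))\<^sup>2 / real N)
      \<le> (\<Sum>i<N. (df (p (Suc i)) - df (p i)) \<bullet> (y - x))"
    by (intro sum_mono) simp
  also have "\<dots> = (df y - df x) \<bullet> (y - x)"
    using sum_lessThan_telescope[of "\<lambda>i. df (p i)" N] N(2,3)
    by (simp add: inner_sum_left[symmetric])
  finally show ?thesis
    using N(1) by simp
qed

lemma lipschitz_from_local:
  fixes T :: "'a::real_normed_vector \<Rightarrow> 'b::real_normed_vector"
  assumes "convex K" "e > 0"
    and local: "\<And>p q. p \<in> K \<Longrightarrow> q \<in> K \<Longrightarrow> norm (q - p) < e \<Longrightarrow>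
                  norm (T q - T p) \<le> \<rho> * norm (q - p)"
    and "x \<in> K" "y \<in> K"
  shows "norm (T y - T x) \<le> \<rho> * norm (y - x)"
proof -
  obtain N p where N: "N > 0" "p 0 = x" "p N = y" "\<And>i. i \<le> N \<Longrightarrow> p i \<in> K"
    and step: "\<And>i. p (Suc i) - p i = (1 / real N) *\<^sub>R (y - x)"
    and small: "norm ((1 / real N) *\<^sub>R (y - x)) < e"
    using convex_uniform_subdivision[OF assms(1,4,5,2)] by metis
  have step_bound: "norm (T (p (Suc i)) - T (p i)) \<le> \<rho> * (norm (y - x) / real N)" if "i < N" for i
    using local[of "p i" "p (Suc i)"] N(4)[of i] N(4)[of "Suc i"] that step small by simp
  have "norm (T y - T x) = norm (\<Sum>i<N. T (p (Suc i)) - T (p i))"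
    using sum_lessThan_telescope[of "\<lambda>i. T (p i)" N] N(2,3) by simp
  also have "\<dots> \<le> (\<Sum>i<N. norm (T (p (Suc i)) - T (p i)))"
    by (rule norm_sum)
  also have "\<dots> \<le> (\<Sum>i<N. \<rho> * (norm (y - x) / real N))"
    using step_bound by (intro sum_mono) simp
  also have "\<dots> = \<rho> * norm (y - x)"
    using N(1) by simp
  finally show ?thesis .
qed

lemma strong_convexity_imp_strongly_monotone:
  assumes sc: "\<forall>y\<in>S. \<forall>z\<in>S. f y \<ge> f z + df z \<bullet> (y - z) + m / 2 * (norm (y - z))\<^sup>2"
    and "y \<in> S" "z \<in> S"
  shows "m * (norm (y - z))\<^sup>2 \<le> (df y - df z) \<bullet> (y - z)"
proof -
  have "f y \<ge> f z + df z \<bullet> (y - z) + m / 2 * (norm (y - z))\<^sup>2"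
    and "f z \<ge> f y + df y \<bullet> (z - y) + m / 2 * (norm (z - y))\<^sup>2"
    using sc assms(2,3) by blast+
  then show ?thesis
    by (simp add: norm_minus_commute inner_diff_left inner_diff_right)
qed

lemma locally_strongly_convex_uniformly_on_compact:
  fixes f :: "'a::euclidean_space \<Rightarrow> real"
  assumes "locally_strongly_convex f df" "compact K"
  obtains m e where "m > 0" "e > 0"
    "\<And>p q. p \<in> K \<Longrightarrow> q \<in> K \<Longrightarrow> norm (q - p) < e \<Longrightarrow> m * (norm (q - p))\<^sup>2 \<le> (df q - df p) \<bullet> (q - p)"
proof (cases "K = {}")
  case True
  then show ?thesis
    using that[of 1 1] by simp
next
  case False
  obtain \<delta> \<mu> where \<delta>: "\<And>c. \<delta> c > 0" and \<mu>: "\<And>c. \<mu> c > 0"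
    and sc: "\<And>c. \<forall>y\<in>ball c (\<delta> c). \<forall>z\<in>ball c (\<delta> c).
                   f y \<ge> f z + df z \<bullet> (y - z) + \<mu> c / 2 * (norm (y - z))\<^sup>2"
    using assms(1) unfolding locally_strongly_convex_def by metis
  have "K \<subseteq> (\<Union>c\<in>K. ball c (\<delta> c))"
    using \<delta> by force
  then obtain C where C: "C \<subseteq> K" "finite C" "K \<subseteq> (\<Union>c\<in>C. ball c (\<delta> c))"
    using compactE_image[OF assms(2), of K "\<lambda>c. ball c (\<delta> c)"] by blast
  then have "C \<noteq> {}"
    using False by auto
  obtain e where e: "0 < e" "\<And>x. x \<in> K \<Longrightarrow> \<exists>G \<in> (\<lambda>c. ball c (\<delta> c)) ` C. ball x e \<subseteq> G"
    using Heine_Borel_lemma[OF assms(2), of "(\<lambda>c. ball c (\<delta> c)) ` C"] C(3) by auto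
  show ?thesis
  proof (rule that[of "Min (\<mu> ` C)" e])
    show "Min (\<mu> ` C) > 0"
      using C(2) \<open>C \<noteq> {}\<close> \<mu> by (simp add: Min_gr_iff)
    fix p q assume pq: "p \<in> K" "q \<in> K" "norm (q - p) < e"
    obtain c where c: "c \<in> C" "ball p e \<subseteq> ball c (\<delta> c)"
      using e(2)[of p] pq(1) by blast
    have "p \<in> ball p e" "q \<in> ball p e"
      using e(1) pq(3) by (auto simp: dist_norm norm_minus_commute)
    then have "q \<in> ball c (\<delta> c)" "p \<in> ball c (\<delta> c)"
      using c(2) by blast+
    then have "\<mu> c * (norm (q - p))\<^sup>2 \<le> (df q - df p) \<bullet> (q - p)"
      by (rule strong_convexity_imp_strongly_monotone[OF sc[of c]])
    moreover have "Min (\<mu> ` C) \<le> \<mu> c"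
      using C(2) c(1) by simp
    ultimately show "Min (\<mu> ` C) * (norm (q - p))\<^sup>2 \<le> (df q - df p) \<bullet> (q - p)"
      by (meson mult_right_mono order_trans zero_le_power2)
  qed (use e in auto)
qed

lemma strongly_monotone_on_compact_convex:
  fixes f :: "'a::euclidean_space \<Rightarrow> real"
  assumes "locally_strongly_convex f df" "compact K" "convex K"
  obtains m where "m > 0"
    "\<And>x y. x \<in> K \<Longrightarrow> y \<in> K \<Longrightarrow> m * (norm (y - x))\<^sup>2 \<le> (df y - df x) \<bullet> (y - x)"
proof -
  obtain m e where "m > 0" "e > 0"
    and "\<And>p q. p \<in> K \<Longrightarrow> q \<in> K \<Longrightarrow> norm (q - p) < e \<Longrightarrow>
           m * (norm (q - p))\<^sup>2 \<le> (df q - df p) \<bullet> (q - p)"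
    using locally_strongly_convex_uniformly_on_compact[OF assms(1,2)] by metis
  with strongly_monotone_from_local[OF assms(3)] that show ?thesis
    by metis
qed

lemma
  assumes mono: "\<And>x y. x \<in> \<Omega> \<Longrightarrow> y \<in> \<Omega> \<Longrightarrow> m * (norm (y - x))\<^sup>2 \<le> (df y - df x) \<bullet> (y - x)"
  shows mu_on_ge: "\<lbrakk>a \<in> \<Omega>; b \<in> \<Omega>; a \<noteq> b\<rbrakk> \<Longrightarrow> m \<le> mu_on df \<Omega>"
    and mu_on_strongly_monotone:
      "\<lbrakk>x \<in> \<Omega>; y \<in> \<Omega>\<rbrakk> \<Longrightarrow> mu_on df \<Omega> * (norm (y - x))\<^sup>2 \<le> (df y - df x) \<bullet> (y - x)"
proof -
  define E where "E = {(df y - df x) \<bullet> (y - x) / (norm (y - x))\<^sup>2 | x y. x \<in> \<Omega> \<and> y \<in> \<Omega> \<and> x \<noteq> y}"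
  have mu: "mu_on df \<Omega> = Inf E"
    by (simp add: mu_on_def E_def)
  have m_le: "m \<le> q" if "q \<in> E" for q
    using that mono by (auto simp: E_def pos_le_divide_eq)
  show "m \<le> mu_on df \<Omega>" if "a \<in> \<Omega>" "b \<in> \<Omega>" "a \<noteq> b"
  proof -
    have "E \<noteq> {}"
      using that unfolding E_def by blast
    then show ?thesis
      unfolding mu using m_le by (rule cInf_greatest)
  qed
  show "mu_on df \<Omega> * (norm (y - x))\<^sup>2 \<le> (df y - df x) \<bullet> (y - x)" if "x \<in> \<Omega>" "y \<in> \<Omega>"
  proof (cases "x = y")
    case False
    then have "(df y - df x) \<bullet> (y - x) / (norm (y - x))\<^sup>2 \<in> E"
      using that unfolding E_def by blast
    moreover have "bdd_below E"
      using m_le by (auto simp: bdd_below_def)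
    ultimately have "mu_on df \<Omega> \<le> (df y - df x) \<bullet> (y - x) / (norm (y - x))\<^sup>2"
      unfolding mu by (rule cInf_lower)
    then show ?thesis
      using False by (simp add: pos_le_divide_eq)
  qed simp
qed

lemma mu_on_pos_strongly_monotone:
  fixes f :: "'a::euclidean_space \<Rightarrow> real"
  assumes "locally_strongly_convex f df" "compact \<Omega>" "convex \<Omega>" "a \<in> \<Omega>" "b \<in> \<Omega>" "a \<noteq> b"
  shows "0 < mu_on df \<Omega>"
    and "\<lbrakk>x \<in> \<Omega>; y \<in> \<Omega>\<rbrakk> \<Longrightarrow> mu_on df \<Omega> * (norm (y - x))\<^sup>2 \<le> (df y - df x) \<bullet> (y - x)"
proof -
  obtain m where "m > 0"
    and m: "\<And>x y. x \<in> \<Omega> \<Longrightarrow> y \<in> \<Omega> \<Longrightarrow> m * (norm (y - x))\<^sup>2 \<le> (df y - df x) \<bullet> (y - x)"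
    using strongly_monotone_on_compact_convex[OF assms(1-3)] by metis
  show "0 < mu_on df \<Omega>"
    using \<open>m > 0\<close> mu_on_ge[OF m assms(4-6)] by linarith
  show "mu_on df \<Omega> * (norm (y - x))\<^sup>2 \<le> (df y - df x) \<bullet> (y - x)" if "x \<in> \<Omega>" "y \<in> \<Omega>"
    using mu_on_strongly_monotone[OF m that] .
qed

lemma gradient_zero_at_minimizer:
  assumes "is_gradient f df" "\<And>y. f xs \<le> f y"
  shows "df xs = 0"
proof -
  have "(f has_derivative (\<lambda>h. df xs \<bullet> h)) (at xs)"
    using assms(1) unfolding is_gradient_def by blast
  then have "(\<lambda>h. df xs \<bullet> h) = (\<lambda>h. 0)"
    using differential_zero_maxmin[of xs UNIV] assms(2) by auto
  then have "df xs \<bullet> df xs = 0"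
    by metis
  then show ?thesis
    by simp
qed

lemma smooth_convex_gradient_gap:
  fixes \<phi> :: "'a::real_inner \<Rightarrow> real"
  assumes conv: "\<And>a b. a \<in> \<Omega> \<Longrightarrow> b \<in> \<Omega> \<Longrightarrow> \<phi> b + d\<phi> b \<bullet> (a - b) \<le> \<phi> a"
    and smooth: "\<And>a b. a \<in> \<Omega> \<Longrightarrow> b \<in> \<Omega> \<Longrightarrow> \<phi> a \<le> \<phi> b + d\<phi> b \<bullet> (a - b) + L / 2 * (norm (a - b))\<^sup>2"
    and "L > 0" "x \<in> \<Omega>" "y \<in> \<Omega>" and w: "y - (1 / L) *\<^sub>R (d\<phi> y - d\<phi> x) \<in> \<Omega>"
  shows "\<phi> x + d\<phi> x \<bullet> (y - x) + (norm (d\<phi> y - d\<phi> x))\<^sup>2 / (2 * L) \<le> \<phi> y"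
proof -
  define g where "g = d\<phi> y - d\<phi> x"
  define w where "w = y - (1 / L) *\<^sub>R g"
  have "w \<in> \<Omega>"
    using w by (simp add: w_def g_def)
  have "\<phi> x + d\<phi> x \<bullet> (w - x) \<le> \<phi> w"
    using conv[OF \<open>w \<in> \<Omega>\<close> \<open>x \<in> \<Omega>\<close>] .
  moreover have "\<phi> w \<le> \<phi> y + d\<phi> y \<bullet> (w - y) + L / 2 * (norm (w - y))\<^sup>2"
    using smooth[OF \<open>w \<in> \<Omega>\<close> \<open>y \<in> \<Omega>\<close>] .
  moreover have "d\<phi> x \<bullet> (w - x) = d\<phi> x \<bullet> (y - x) - (1 / L) * (d\<phi> x \<bullet> g)"
    by (simp add: w_def inner_diff_right algebra_simps)
  moreover have "d\<phi> y \<bullet> (w - y) = - ((1 / L) * (d\<phi> y \<bullet> g))"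
    by (simp add: w_def inner_diff_right)
  moreover have "L / 2 * (norm (w - y))\<^sup>2 = (norm g)\<^sup>2 / (2 * L)"
    using \<open>L > 0\<close> by (simp add: w_def power2_eq_square field_simps)
  moreover have "(1 / L) * (d\<phi> y \<bullet> g) - (1 / L) * (d\<phi> x \<bullet> g) = (norm g)\<^sup>2 / L"
    by (simp add: g_def inner_diff_left power2_norm_eq_inner diff_divide_distrib[symmetric])
  moreover have "(norm g)\<^sup>2 / L = 2 * ((norm g)\<^sup>2 / (2 * L))"
    by simp
  ultimately show ?thesis
    unfolding g_def by linarith
qed

lemma smooth_convex_cocoercive:
  fixes \<phi> :: "'a::real_inner \<Rightarrow> real"
  assumes conv: "\<And>a b. a \<in> \<Omega> \<Longrightarrow> b \<in> \<Omega> \<Longrightarrow> \<phi> b + d\<phi> b \<bullet> (a - b) \<le> \<phi> a"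
    and smooth: "\<And>a b. a \<in> \<Omega> \<Longrightarrow> b \<in> \<Omega> \<Longrightarrow> \<phi> a \<le> \<phi> b + d\<phi> b \<bullet> (a - b) + L / 2 * (norm (a - b))\<^sup>2"
    and "L > 0" "x \<in> \<Omega>" "y \<in> \<Omega>"
    and "y - (1 / L) *\<^sub>R (d\<phi> y - d\<phi> x) \<in> \<Omega>" "x + (1 / L) *\<^sub>R (d\<phi> y - d\<phi> x) \<in> \<Omega>"
  shows "(norm (d\<phi> y - d\<phi> x))\<^sup>2 / L \<le> (d\<phi> y - d\<phi> x) \<bullet> (y - x)"
proof -
  have "x - (1 / L) *\<^sub>R (d\<phi> x - d\<phi> y) \<in> \<Omega>"
    using assms(7) by (simp add: algebra_simps)
  then have "\<phi> y + d\<phi> y \<bullet> (x - y) + (norm (d\<phi> y - d\<phi> x))\<^sup>2 / (2 * L) \<le> \<phi> x"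
    using smooth_convex_gradient_gap[OF conv smooth assms(3,5,4)] by (simp add: norm_minus_commute)
  moreover have "\<phi> x + d\<phi> x \<bullet> (y - x) + (norm (d\<phi> y - d\<phi> x))\<^sup>2 / (2 * L) \<le> \<phi> y"
    by (rule smooth_convex_gradient_gap[OF conv smooth assms(3,4,5,6)])
  ultimately show ?thesis
    by (simp add: inner_diff_left inner_diff_right)
qed

lemma strongly_convex_smooth_shifted:
  fixes f :: "'a::real_inner \<Rightarrow> real"
  assumes sc: "f b + df b \<bullet> (a - b) + \<mu> / 2 * (norm (a - b))\<^sup>2 \<le> f a"
    and smooth: "f a \<le> f b + df b \<bullet> (a - b) + L / 2 * (norm (a - b))\<^sup>2"
  shows "(f b - \<mu> / 2 * (norm b)\<^sup>2) + (df b - \<mu> *\<^sub>R b) \<bullet> (a - b) \<le> f a - \<mu> / 2 * (norm a)\<^sup>2"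
    and "f a - \<mu> / 2 * (norm a)\<^sup>2
      \<le> (f b - \<mu> / 2 * (norm b)\<^sup>2) + (df b - \<mu> *\<^sub>R b) \<bullet> (a - b) + (L - \<mu>) / 2 * (norm (a - b))\<^sup>2"
proof -
  have square: "\<mu> / 2 * (norm a)\<^sup>2
      = \<mu> / 2 * (norm b)\<^sup>2 + \<mu> * (b \<bullet> (a - b)) + \<mu> / 2 * (norm (a - b))\<^sup>2"
    by (simp add: power2_norm_eq_inner inner_diff_left inner_diff_right inner_commute algebra_simps)
  have inner: "(df b - \<mu> *\<^sub>R b) \<bullet> (a - b) = df b \<bullet> (a - b) - \<mu> * (b \<bullet> (a - b))"
    by (simp add: inner_diff_left)
  have "(L - \<mu>) / 2 * (norm (a - b))\<^sup>2 = L / 2 * (norm (a - b))\<^sup>2 - \<mu> / 2 * (norm (a - b))\<^sup>2"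
    by (simp only: diff_divide_distrib left_diff_distrib)
  then show "(f b - \<mu> / 2 * (norm b)\<^sup>2) + (df b - \<mu> *\<^sub>R b) \<bullet> (a - b) \<le> f a - \<mu> / 2 * (norm a)\<^sup>2"
    and "f a - \<mu> / 2 * (norm a)\<^sup>2
      \<le> (f b - \<mu> / 2 * (norm b)\<^sup>2) + (df b - \<mu> *\<^sub>R b) \<bullet> (a - b) + (L - \<mu>) / 2 * (norm (a - b))\<^sup>2"
    using sc smooth square unfolding inner by linarith+
qed

text \<open>The auxiliary points of the cocoercivity argument for \<open>f - \<mu>/2 \<parallel>\<cdot>\<parallel>\<^sup>2\<close> lie within \<open>\<rho>\<close>
  of \<open>p\<close> and \<open>q\<close>, hence the requirement that both points lie deep enough inside \<open>\<Omega>\<close>.\<close>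

lemma strongly_convex_smooth_interpolation:
  fixes f :: "'a::real_inner \<Rightarrow> real"
  assumes sc: "\<And>a b. a \<in> \<Omega> \<Longrightarrow> b \<in> \<Omega> \<Longrightarrow> f b + df b \<bullet> (a - b) + \<mu> / 2 * (norm (a - b))\<^sup>2 \<le> f a"
    and smooth: "\<And>a b. a \<in> \<Omega> \<Longrightarrow> b \<in> \<Omega> \<Longrightarrow> f a \<le> f b + df b \<bullet> (a - b) + L / 2 * (norm (a - b))\<^sup>2"
    and "0 \<le> \<mu>" "\<mu> < L"
    and lip: "norm (df q - df p) \<le> L * norm (q - p)"
    and deep: "cball p \<rho> \<subseteq> \<Omega>" "cball q \<rho> \<subseteq> \<Omega>" "2 * L * norm (q - p) \<le> (L - \<mu>) * \<rho>"
  shows "(norm (df q - df p))\<^sup>2 + \<mu> * L * (norm (q - p))\<^sup>2 \<le> (L + \<mu>) * ((df q - df p) \<bullet> (q - p))"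
proof -
  define \<phi> where "\<phi> z = f z - \<mu> / 2 * (norm z)\<^sup>2" for z
  define d\<phi> where "d\<phi> z = df z - \<mu> *\<^sub>R z" for z
  define g where "g = df q - df p"
  define d where "d = q - p"
  have conv: "\<phi> b + d\<phi> b \<bullet> (a - b) \<le> \<phi> a"
    and smooth_\<phi>: "\<phi> a \<le> \<phi> b + d\<phi> b \<bullet> (a - b) + (L - \<mu>) / 2 * (norm (a - b))\<^sup>2"
    if "a \<in> \<Omega>" "b \<in> \<Omega>" for a b
    using strongly_convex_smooth_shifted[where f = f and df = df, OF sc[OF that] smooth[OF that]]
    unfolding \<phi>_def d\<phi>_def
    by simp_all
  have "L > 0"
    using assms(3,4) by linarith
  then have "0 \<le> 2 * L * norm (q - p)"
    by simp
  with deep(3) have "0 \<le> (L - \<mu>) * \<rho>"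
    by linarith
  then have "\<rho> \<ge> 0"
    using assms(4) by (simp add: zero_le_mult_iff)
  then have "p \<in> \<Omega>" "q \<in> \<Omega>"
    using deep(1,2) by auto
  have d\<phi>_diff: "d\<phi> q - d\<phi> p = g - \<mu> *\<^sub>R d"
    by (simp add: d\<phi>_def g_def d_def algebra_simps)
  have "norm (g - \<mu> *\<^sub>R d) \<le> norm g + \<mu> * norm d"
    using norm_triangle_ineq4[of g "\<mu> *\<^sub>R d"] assms(3) by simp
  also have "\<dots> \<le> 2 * L * norm d"
    using lip assms(4) mult_right_mono[of \<mu> L "norm d"] by (simp add: g_def d_def)
  also have "\<dots> \<le> (L - \<mu>) * \<rho>"
    using deep(3) by (simp add: d_def)
  finally have "norm ((1 / (L - \<mu>)) *\<^sub>R (d\<phi> q - d\<phi> p)) \<le> \<rho>"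
    using assms(4) by (simp add: d\<phi>_diff divide_le_eq mult.commute)
  then have "q - (1 / (L - \<mu>)) *\<^sub>R (d\<phi> q - d\<phi> p) \<in> \<Omega>"
    and "p + (1 / (L - \<mu>)) *\<^sub>R (d\<phi> q - d\<phi> p) \<in> \<Omega>"
    using deep(1,2) by (auto simp: dist_norm)
  from smooth_convex_cocoercive[OF conv smooth_\<phi> _ \<open>p \<in> \<Omega>\<close> \<open>q \<in> \<Omega>\<close> this] assms(4)
  have "(norm (g - \<mu> *\<^sub>R d))\<^sup>2 \<le> (L - \<mu>) * ((g - \<mu> *\<^sub>R d) \<bullet> d)"
    by (simp add: d\<phi>_diff d_def pos_divide_le_eq mult.commute)
  moreover have "(norm (g - \<mu> *\<^sub>R d))\<^sup>2 = (norm g)\<^sup>2 - 2 * \<mu> * (g \<bullet> d) + \<mu> * \<mu> * (norm d)\<^sup>2"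
    by (simp add: power2_norm_eq_inner inner_diff_left inner_diff_right inner_commute algebra_simps)
  moreover have "(g - \<mu> *\<^sub>R d) \<bullet> d = g \<bullet> d - \<mu> * (norm d)\<^sup>2"
    by (simp add: inner_diff_left power2_norm_eq_inner)
  ultimately have "(norm g)\<^sup>2 - 2 * \<mu> * (g \<bullet> d) + \<mu> * \<mu> * (norm d)\<^sup>2
      \<le> (L - \<mu>) * (g \<bullet> d - \<mu> * (norm d)\<^sup>2)"
    by simp
  then show ?thesis
    unfolding g_def d_def by (simp add: algebra_simps)
qed

lemma gradient_step_contraction:
  fixes g d :: "'a::real_inner"
  assumes interpolation: "(norm g)\<^sup>2 + \<mu> * L * (norm d)\<^sup>2 \<le> (L + \<mu>) * (g \<bullet> d)"
    and "0 < \<mu>" "\<mu> < L" "0 < \<alpha>bar" "\<alpha>bar \<le> a" "a * L \<le> 1"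
  shows "norm (d - a *\<^sub>R g) \<le> sqrt (1 - 2 * \<alpha>bar * \<mu> * L / (\<mu> + L)) * norm d"
proof -
  have "0 < a"
    using assms(4,5) by linarith
  then have "a * \<mu> \<le> a * L"
    using assms(3) by simp
  moreover have "a * (L + \<mu>) = a * L + a * \<mu>"
    by (simp add: distrib_left)
  ultimately have a: "0 < a" "a * (L + \<mu>) \<le> 2"
    using \<open>0 < a\<close> assms(6) by linarith+
  have "(L + \<mu>) * (norm (d - a *\<^sub>R g))\<^sup>2
      = (L + \<mu>) * (norm d)\<^sup>2 - 2 * a * ((L + \<mu>) * (g \<bullet> d)) + a * (a * (L + \<mu>)) * (norm g)\<^sup>2"
    by (simp add: power2_norm_eq_inner inner_diff_left inner_diff_right inner_commute algebra_simps)
  also have "\<dots>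
      \<le> (L + \<mu>) * (norm d)\<^sup>2 - 2 * a * ((norm g)\<^sup>2 + \<mu> * L * (norm d)\<^sup>2) + a * 2 * (norm g)\<^sup>2"
    using mult_left_mono[OF interpolation, of "2 * a"] mult_left_mono[OF a(2), of "a * (norm g)\<^sup>2"]
      a(1)
    by (simp add: algebra_simps)
  also have "\<dots> \<le> (L + \<mu>) * (norm d)\<^sup>2 - 2 * \<alpha>bar * \<mu> * L * (norm d)\<^sup>2"
    using assms(2,3,5) by (simp add: algebra_simps mult_right_mono)
  also have "\<dots> = (L + \<mu>) * ((1 - 2 * \<alpha>bar * \<mu> * L / (\<mu> + L)) * (norm d)\<^sup>2)"
    using assms(2,3) by (simp add: field_simps)
  finally have "(norm (d - a *\<^sub>R g))\<^sup>2 \<le> (1 - 2 * \<alpha>bar * \<mu> * L / (\<mu> + L)) * (norm d)\<^sup>2"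
    using assms(2,3) by (simp add: mult_le_cancel_left_pos)
  then show ?thesis
    using real_sqrt_le_mono by (fastforce simp: real_sqrt_mult)
qed

lemma gradient_dominance:
  fixes x y :: "'a::real_inner"
  assumes "f x + df x \<bullet> (y - x) + \<mu> / 2 * (norm (y - x))\<^sup>2 \<le> f y" "0 \<le> \<mu>"
  shows "2 * \<mu> * (f x - f y) \<le> (norm (df x))\<^sup>2"
proof -
  define G where "G = norm (df x)"
  define D where "D = norm (x - y)"
  have "df x \<bullet> (x - y) \<le> G * D"
    unfolding G_def D_def by (rule norm_cauchy_schwarz)
  then have "f x - f y \<le> G * D - \<mu> / 2 * D\<^sup>2"
    using assms(1) by (simp add: D_def norm_minus_commute inner_diff_right)
  then have "2 * \<mu> * (f x - f y) \<le> 2 * \<mu> * (G * D - \<mu> / 2 * D\<^sup>2)"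
    using assms(2) by (intro mult_left_mono) auto
  also have "\<dots> \<le> G\<^sup>2"
    using zero_le_power2[of "\<mu> * D - G"] by (simp add: power2_eq_square algebra_simps)
  finally show ?thesis
    unfolding G_def .
qed

lemma geometric_decay:
  fixes u :: "nat \<Rightarrow> real"
  assumes "\<And>k. u (Suc k) \<le> b * u k" "0 \<le> b"
  shows "u k \<le> b ^ k * u 0"
proof (induction k)
  case (Suc k)
  have "u (Suc k) \<le> b * u k"
    by (rule assms(1))
  also have "\<dots> \<le> b * (b ^ k * u 0)"
    using Suc assms(2) by (rule mult_left_mono)
  finally show ?case
    by simp
qed simp

lemma first_index_le_iter_bound:
  fixes u :: "nat \<Rightarrow> real"
  assumes u: "\<And>k. u k \<le> b ^ k * a" and "a > 0" "0 < b" "b < 1" "\<epsilon> > 0"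
  shows "(\<exists>k. u k \<le> \<epsilon>) \<and> (LEAST k. u k \<le> \<epsilon>) \<le> nat (iter_bound \<epsilon> a b)"
proof -
  define K where "K = nat (iter_bound \<epsilon> a b)"
  have "b ^ K * a \<le> \<epsilon>"
  proof (cases "a \<le> \<epsilon>")
    case True
    have "b ^ K \<le> 1"
      using assms(3,4) by (simp add: power_le_one)
    then have "b ^ K * a \<le> 1 * a"
      using assms(2) by (intro mult_right_mono) auto
    then show ?thesis
      using True by simp
  next
    case False
    have log_b: "ln (inverse b) > 0"
      using assms(3,4) by (simp add: ln_inverse)
    have "(ln (inverse \<epsilon>) + ln a) / ln (inverse b) \<le> real K"
      unfolding K_def iter_bound_def by linarith
    then have "ln (inverse \<epsilon>) + ln a \<le> real K * ln (inverse b)"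
      using log_b by (simp add: divide_le_eq)
    then have "ln (b ^ K * a) \<le> ln \<epsilon>"
      using assms(2-5) by (simp add: ln_mult ln_realpow ln_inverse algebra_simps)
    then show ?thesis
      using assms(2-5) by simp
  qed
  then have "u K \<le> \<epsilon>"
    using u[of K] by linarith
  then show ?thesis
    using Least_le[of "\<lambda>k. u k \<le> \<epsilon>" K] unfolding K_def by auto
qed

lemma norm_le_Sup_sublevel:
  assumes "bounded (sublevel f x0)" "f y \<le> f x0"
  shows "norm y \<le> Sup (norm ` sublevel f x0)"
proof (rule cSup_upper)
  show "bdd_above (norm ` sublevel f x0)"
    using assms(1) unfolding bounded_iff bdd_above_def by auto
qed (use assms(2) in \<open>auto simp: sublevel_def\<close>)

locale gradient_descent_on_ball =
  fixes f :: "'a::euclidean_space \<Rightarrow> real" and df :: "'a \<Rightarrow> 'a"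
    and x :: "nat \<Rightarrow> 'a" and \<alpha> :: "nat \<Rightarrow> real"
    and xs :: 'a and r L \<mu> \<alpha>bar :: real
  assumes grad: "is_gradient f df"
    and minimizer: "\<And>y. f xs \<le> f y"
    and sublevel_in_ball: "\<And>y. f y \<le> f (x 0) \<Longrightarrow> norm y \<le> r"
    and r_pos: "0 < r"
    and lipschitz: "\<And>y z. y \<in> cball 0 (5 * r) \<Longrightarrow> z \<in> cball 0 (5 * r) \<Longrightarrow>
                      norm (df y - df z) \<le> L * norm (y - z)"
    and strongly_monotone: "\<And>y z. y \<in> cball 0 (5 * r) \<Longrightarrow> z \<in> cball 0 (5 * r) \<Longrightarrow>
                              \<mu> * (norm (z - y))\<^sup>2 \<le> (df z - df y) \<bullet> (z - y)"
    and mu_pos: "0 < \<mu>" and mu_less_L: "\<mu> < L"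
    and alpha_bar_pos: "0 < \<alpha>bar"
    and step_sizes: "\<And>k. \<alpha> k \<in> {\<alpha>bar..1 / L}"
    and iter: "\<And>k. x (Suc k) = x k - \<alpha> k *\<^sub>R df (x k)"
begin

abbreviation \<Omega> :: "'a set" where
  "\<Omega> \<equiv> cball 0 (5 * r)"

abbreviation q0 :: real where
  "q0 \<equiv> 2 * \<alpha>bar * \<mu> * L / (\<mu> + L)"

abbreviation q1 :: real where
  "q1 \<equiv> \<mu>\<^sup>2 * \<alpha>bar\<^sup>2 / 4"

lemma strong_convexity: "u \<in> \<Omega> \<Longrightarrow> v \<in> \<Omega> \<Longrightarrow> f v + df v \<bullet> (u - v) + \<mu> / 2 * (norm (u - v))\<^sup>2 \<le> f u"
  by (rule strong_convexity_from_strong_monotonicity[OF grad convex_cball strongly_monotone])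

lemma smoothness: "u \<in> \<Omega> \<Longrightarrow> v \<in> \<Omega> \<Longrightarrow> f u \<le> f v + df v \<bullet> (u - v) + L / 2 * (norm (u - v))\<^sup>2"
  by (rule descent_lemma[OF grad convex_cball lipschitz])

lemma step_size: "\<alpha>bar \<le> \<alpha> k" "0 < \<alpha> k" "\<alpha> k * L \<le> 1"
  using step_sizes[of k] alpha_bar_pos mu_pos mu_less_L by (auto simp: field_simps)

lemma alpha_bar_L_le: "\<alpha>bar * L \<le> 1"
  using step_size[of 0] mult_right_mono[of \<alpha>bar "\<alpha> 0" L] mu_pos mu_less_L by linarith

lemma alpha_bar_mu_less: "\<alpha>bar * \<mu> < 1"
  using alpha_bar_L_le alpha_bar_pos mu_less_L mult_strict_left_mono[of \<mu> L \<alpha>bar] by linarith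

lemma q1_le: "q1 \<le> \<alpha>bar * \<mu>"
proof -
  have "(\<alpha>bar * \<mu>)\<^sup>2 \<le> \<alpha>bar * \<mu>"
    using alpha_bar_mu_less alpha_bar_pos mu_pos by (simp add: power2_eq_square mult_left_le_one_le)
  moreover have "q1 = (\<alpha>bar * \<mu>)\<^sup>2 / 4"
    by (simp add: power_mult_distrib)
  moreover have "0 < \<alpha>bar * \<mu>"
    using alpha_bar_pos mu_pos by simp
  ultimately show ?thesis
    by linarith
qed

lemma rate_bounds: "0 < q0" "q0 < 1" "0 < q1" "q1 < 1"
proof -
  have "2 * \<alpha>bar * \<mu> * L = 2 * \<mu> * (\<alpha>bar * L)"
    by simp
  also have "\<dots> \<le> 2 * \<mu>"
    using alpha_bar_L_le mu_pos by (simp add: mult_left_le)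
  also have "\<dots> < \<mu> + L"
    using mu_less_L by simp
  finally show "0 < q0" "q0 < 1"
    using alpha_bar_pos mu_pos mu_less_L by simp_all
  show "0 < q1" "q1 < 1"
    using q1_le alpha_bar_mu_less alpha_bar_pos mu_pos by simp_all
qed

lemma minimizer_in_ball: "norm xs \<le> r"
  using sublevel_in_ball[OF minimizer] .

lemma gradient_at_minimizer: "df xs = 0"
  using gradient_zero_at_minimizer[OF grad minimizer] .

lemma gradient_bound: "p \<in> \<Omega> \<Longrightarrow> norm (df p) \<le> L * norm (p - xs)"
  using lipschitz[of p xs] minimizer_in_ball r_pos by (simp add: gradient_at_minimizer)

lemma descent_step:
  assumes "f (x k) \<le> f (x 0)"
  shows "f (x (Suc k)) \<le> f (x k) - \<alpha> k / 2 * (norm (df (x k)))\<^sup>2"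
proof -
  define g where "g = df (x k)"
  define a where "a = \<alpha> k"
  have a: "0 < a" "a * L \<le> 1"
    using step_size by (simp_all add: a_def)
  have "norm (x k) \<le> r" "norm xs \<le> r"
    using sublevel_in_ball[OF assms] minimizer_in_ball .
  then have "x k \<in> \<Omega>"
    using r_pos by simp
  have "a * norm g \<le> a * (L * norm (x k - xs))"
    using gradient_bound[OF \<open>x k \<in> \<Omega>\<close>] a by (simp add: g_def)
  also have "\<dots> \<le> norm (x k - xs)"
    using mult_right_mono[OF a(2), of "norm (x k - xs)"] by (simp add: mult.assoc)
  also have "\<dots> \<le> 2 * r"
    using norm_triangle_ineq4[of "x k" xs] \<open>norm (x k) \<le> r\<close> \<open>norm xs \<le> r\<close> by linarith
  finally have "norm (x (Suc k)) \<le> 3 * r"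
    using norm_triangle_ineq4[of "x k" "a *\<^sub>R g"] \<open>norm (x k) \<le> r\<close> a
    by (simp add: iter a_def g_def)
  then have "x (Suc k) \<in> \<Omega>"
    using r_pos by simp
  then have "f (x (Suc k)) \<le> f (x k) + g \<bullet> (x (Suc k) - x k) + L / 2 * (norm (x (Suc k) - x k))\<^sup>2"
    using smoothness[OF _ \<open>x k \<in> \<Omega>\<close>] by (simp add: g_def)
  also have "\<dots> = f (x k) - a * (norm g)\<^sup>2 + (a * L) * (a / 2 * (norm g)\<^sup>2)"
    using a
    by (simp add: iter a_def g_def dot_square_norm power_mult_distrib power2_eq_square algebra_simps)
  also have "\<dots> \<le> f (x k) - a * (norm g)\<^sup>2 + 1 * (a / 2 * (norm g)\<^sup>2)"
    using a by (intro add_left_mono mult_right_mono) auto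
  finally show ?thesis
    by (simp add: a_def g_def)
qed

lemma iterate_bounds_in_sublevel: "f (x k) \<le> f (x 0)"
proof (induction k)
  case (Suc k)
  have "0 \<le> \<alpha> k / 2 * (norm (df (x k)))\<^sup>2"
    using step_size(2)[of k] by simp
  then show ?case
    using descent_step[OF Suc] Suc by linarith
qed simp

lemma iterate_bounds_in_ball: "norm (x k) \<le> r"
  using sublevel_in_ball[OF iterate_bounds_in_sublevel] .

lemma objective_gap_decay: "f (x k) - f xs \<le> (1 - q1) ^ k * (f (x 0) - f xs)"
proof (rule geometric_decay)
  show "0 \<le> 1 - q1"
    using rate_bounds by simp
  fix k
  have "x k \<in> \<Omega>" "xs \<in> \<Omega>"
    using iterate_bounds_in_ball[of k] minimizer_in_ball r_pos by simp_all
  then have "2 * \<mu> * (f (x k) - f xs) \<le> (norm (df (x k)))\<^sup>2"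
    using gradient_dominance[where f = f and df = df, OF strong_convexity[OF \<open>xs \<in> \<Omega>\<close> \<open>x k \<in> \<Omega>\<close>]]
      mu_pos by simp
  then have "\<alpha> k / 2 * (2 * \<mu> * (f (x k) - f xs)) \<le> \<alpha> k / 2 * (norm (df (x k)))\<^sup>2"
    using step_size(2)[of k] by (intro mult_left_mono) auto
  moreover have "(1 - \<alpha> k * \<mu>) * (f (x k) - f xs)
      = f (x k) - f xs - \<alpha> k / 2 * (2 * \<mu> * (f (x k) - f xs))"
    by (simp add: algebra_simps)
  ultimately have "f (x (Suc k)) - f xs \<le> (1 - \<alpha> k * \<mu>) * (f (x k) - f xs)"
    using descent_step[OF iterate_bounds_in_sublevel[of k]] by linarith
  also have "\<dots> \<le> (1 - q1) * (f (x k) - f xs)"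
  proof (rule mult_right_mono)
    show "1 - \<alpha> k * \<mu> \<le> 1 - q1"
      using q1_le mult_right_mono[OF step_size(1)[of k], of \<mu>] mu_pos by linarith
    show "0 \<le> f (x k) - f xs"
      using minimizer[of "x k"] by simp
  qed
  finally show "f (x (Suc k)) - f xs \<le> (1 - q1) * (f (x k) - f xs)" .
qed

lemma gradient_decay: "norm (df (x k)) \<le> sqrt (1 - q1) ^ k * sqrt (2 * L\<^sup>2 / \<mu> * (f (x 0) - f xs))"
proof -
  have "x k \<in> \<Omega>" "xs \<in> \<Omega>"
    using iterate_bounds_in_ball[of k] minimizer_in_ball r_pos by simp_all
  have "\<mu> / 2 * (norm (x k - xs))\<^sup>2 \<le> f (x k) - f xs"
    using strong_convexity[OF \<open>x k \<in> \<Omega>\<close> \<open>xs \<in> \<Omega>\<close>] by (simp add: gradient_at_minimizer)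
  then have "(norm (x k - xs))\<^sup>2 \<le> 2 / \<mu> * (f (x k) - f xs)"
    using mu_pos by (simp add: field_simps)
  moreover have "(norm (df (x k)))\<^sup>2 \<le> L\<^sup>2 * (norm (x k - xs))\<^sup>2"
    using gradient_bound[OF \<open>x k \<in> \<Omega>\<close>] by (simp add: power_mono flip: power_mult_distrib)
  ultimately have "(norm (df (x k)))\<^sup>2 \<le> L\<^sup>2 * (2 / \<mu> * ((1 - q1) ^ k * (f (x 0) - f xs)))"
    using objective_gap_decay[of k] mu_pos
    by (meson mult_left_mono order_trans zero_le_power2 less_imp_le zero_le_divide_iff
        zero_le_numeral)
  then have "norm (df (x k)) \<le> sqrt ((1 - q1) ^ k * (2 * L\<^sup>2 / \<mu> * (f (x 0) - f xs)))"
    by (simp add: real_le_rsqrt ac_simps)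
  then show ?thesis
    by (simp only: real_sqrt_mult real_sqrt_power)
qed

text \<open>Points of the ball of radius \<open>3 r\<close> are at depth \<open>2 r\<close> in \<open>\<Omega>\<close>, which allows the interpolation
  inequality only for nearby points; the contraction estimate derived from it is then
  extended to the whole ball along segments.\<close>

lemma interpolation_nearby:
  assumes "p \<in> cball 0 (3 * r)" "q \<in> cball 0 (3 * r)" "norm (q - p) < r * (L - \<mu>) / L"
  shows "(norm (df q - df p))\<^sup>2 + \<mu> * L * (norm (q - p))\<^sup>2 \<le> (L + \<mu>) * ((df q - df p) \<bullet> (q - p))"
proof (rule strongly_convex_smooth_interpolation[OF strong_convexity smoothness])
  show "0 \<le> \<mu>" "\<mu> < L"
    using mu_pos mu_less_L by simp_all
  show "norm (df q - df p) \<le> L * norm (q - p)"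
    using assms(1,2) r_pos by (intro lipschitz) auto
  show "cball p (2 * r) \<subseteq> \<Omega>" "cball q (2 * r) \<subseteq> \<Omega>"
    using assms(1,2) by (simp_all add: cball_subset_cball_iff)
  show "2 * L * norm (q - p) \<le> (L - \<mu>) * (2 * r)"
    using assms(3) mu_pos mu_less_L by (simp add: field_simps)
qed

lemma gradient_map_contraction:
  assumes "\<alpha>bar \<le> a" "a * L \<le> 1" "p \<in> cball 0 (3 * r)" "q \<in> cball 0 (3 * r)"
  shows "norm ((q - a *\<^sub>R df q) - (p - a *\<^sub>R df p)) \<le> sqrt (1 - q0) * norm (q - p)"
proof (rule lipschitz_from_local[OF convex_cball _ _ assms(3,4)])
  show "0 < r * (L - \<mu>) / L"
    using r_pos mu_pos mu_less_L by simp
  fix p q :: 'a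
  assume "p \<in> cball 0 (3 * r)" "q \<in> cball 0 (3 * r)" "norm (q - p) < r * (L - \<mu>) / L"
  from gradient_step_contraction[OF interpolation_nearby[OF this] mu_pos mu_less_L alpha_bar_pos
      assms(1,2)]
  show "norm ((q - a *\<^sub>R df q) - (p - a *\<^sub>R df p)) \<le> sqrt (1 - q0) * norm (q - p)"
    by (simp add: algebra_simps)
qed

lemma distance_decay: "norm (x k - xs) \<le> sqrt (1 - q0) ^ k * norm (x 0 - xs)"
proof (rule geometric_decay)
  show "0 \<le> sqrt (1 - q0)"
    using rate_bounds by simp
  fix k
  have "x k \<in> cball 0 (3 * r)" "xs \<in> cball 0 (3 * r)"
    using iterate_bounds_in_ball[of k] minimizer_in_ball r_pos by simp_all
  from gradient_map_contraction[OF step_size(1,3) this(2,1)]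
  show "norm (x (Suc k) - xs) \<le> sqrt (1 - q0) * norm (x k - xs)"
    by (simp add: iter gradient_at_minimizer)
qed

end

theorem theorem3p18:
  fixes f :: "'a::euclidean_space \<Rightarrow> real"
    and df :: "'a \<Rightarrow> 'a"
    and x :: "nat \<Rightarrow> 'a"
    and \<alpha> :: "nat \<Rightarrow> real"
    and x0 xs :: 'a
    and L \<alpha>bar \<epsilon> :: real
  assumes grad: "is_gradient f df"
    and cvx: "convex_on UNIV f"
    and C1: "continuous_on UNIV df"
    and lsc: "locally_strongly_convex f df"
    and llip: "locally_lipschitz_grad df"
    and opt: "\<forall>y. f xs \<le> f y"
    and bdd: "bounded (sublevel f x0)"
    and x0_nonopt: "f xs < f x0"
    and L_pos: "L > 0"
    and L_lip: "\<forall>y\<in>cball 0 (5 * Sup (norm ` sublevel f x0)).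
                \<forall>z\<in>cball 0 (5 * Sup (norm ` sublevel f x0)).
                  norm (df y - df z) \<le> L * norm (y - z)"
    and mu_lt: "mu_on df (cball 0 (5 * Sup (norm ` sublevel f x0))) < L"
    and abar: "0 < \<alpha>bar" "\<alpha>bar < 1 / L"
    and steps: "\<forall>k. \<alpha> k \<in> {\<alpha>bar..1 / L}"
    and start: "x 0 = x0"
    and iter: "\<forall>k. x (Suc k) = x k - \<alpha> k *\<^sub>R df (x k)"
    and eps: "\<epsilon> > 0"
  shows
    "let \<mu> = mu_on df (cball 0 (5 * Sup (norm ` sublevel f x0)));
         q0 = 2 * \<alpha>bar * \<mu> * L / (\<mu> + L);
         q1 = \<mu>\<^sup>2 * \<alpha>bar\<^sup>2 / 4
     in ((\<exists>k. norm (x k - xs) \<le> \<epsilon>) \<and>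
         (LEAST k. norm (x k - xs) \<le> \<epsilon>)
            \<le> nat (iter_bound \<epsilon> (norm (x0 - xs)) (sqrt (1 - q0))))
      \<and> ((\<exists>k. f (x k) - f xs \<le> \<epsilon>) \<and>
         (LEAST k. f (x k) - f xs \<le> \<epsilon>)
            \<le> nat (iter_bound \<epsilon> (f x0 - f xs) (1 - q1)))
      \<and> ((\<exists>k. norm (df (x k)) \<le> \<epsilon>) \<and>
         (LEAST k. norm (df (x k)) \<le> \<epsilon>)
            \<le> nat (iter_bound \<epsilon> (sqrt (2 * L\<^sup>2 / \<mu> * (f x0 - f xs))) (sqrt (1 - q1))))"
proof -
  define r where "r = Sup (norm ` sublevel f x0)"
  define \<mu> where "\<mu> = mu_on df (cball 0 (5 * r))"
  have in_ball: "norm y \<le> r" if "f y \<le> f x0" for y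
    unfolding r_def using norm_le_Sup_sublevel[OF bdd] that .
  have "norm x0 \<le> r" "norm xs \<le> r" "x0 \<noteq> xs"
    using in_ball opt x0_nonopt by auto
  then have "r > 0"
    by (metis norm_ge_zero norm_le_zero_iff order.trans not_less)
  then have "0 < \<mu>" and \<mu>_monotone: "\<And>y z. y \<in> cball 0 (5 * r) \<Longrightarrow> z \<in> cball 0 (5 * r) \<Longrightarrow>
      \<mu> * (norm (z - y))\<^sup>2 \<le> (df z - df y) \<bullet> (z - y)"
    using mu_on_pos_strongly_monotone[where \<Omega> = "cball 0 (5 * r)" and a = x0 and b = xs,
      OF lsc compact_cball convex_cball]
      \<open>norm x0 \<le> r\<close> \<open>norm xs \<le> r\<close> \<open>x0 \<noteq> xs\<close> unfolding \<mu>_def by auto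
  interpret gradient_descent_on_ball f df x \<alpha> xs r L \<mu> \<alpha>bar
    using grad opt in_ball \<open>r > 0\<close> L_lip \<mu>_monotone \<open>0 < \<mu>\<close> mu_lt abar(1) steps iter
    by unfold_locales (auto simp: start r_def \<mu>_def)
  have "0 < norm (x0 - xs)" "0 < f x0 - f xs" "0 < 2 * L\<^sup>2 / \<mu> * (f x0 - f xs)"
    using \<open>x0 \<noteq> xs\<close> x0_nonopt \<open>0 < \<mu>\<close> L_pos by simp_all
  then show ?thesis
    using first_index_le_iter_bound[OF distance_decay] first_index_le_iter_bound[OF objective_gap_decay]
      first_index_le_iter_bound[OF gradient_decay] rate_bounds eps
    unfolding Let_def start r_def[symmetric] \<mu>_def[symmetric] by simp
qed
end
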